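(* Let $\mathrm{VES}$, $\mathrm{VFS}$, $\mathrm{CES}$, $\mathrm{CNF}$ and the maps $\Psi,\Psi_v,\Psi_x,\Theta,\Theta_v,\Theta_x,\Upsilon,\Phi$ be as in the context. Then $\mathrm{VES}\cong\mathrm{VFS}$ and $\mathrm{CES}\cong\mathrm{CNF}$, in the following sense: (a) for all terms $M$, values $V$ and elements $c_x$ of $\mathrm{VES}$: $\Theta(\Psi M)=M$, $\Theta_v(\Psi_v V)=V$, $\Theta_x(\Psi_x(c_x))=c_x$; for all terms $M$, values $V$ and formal contexts $c$ of $\mathrm{VFS}$: $\Psi(\Theta M)=M$, $\Psi_v(\Theta_v V)=V$, $\Psi_x(\Theta_x(c))=c$; if $M_1\to M_2$ in $\mathrm{VES}$ then $\Psi M_1\to\Psi M_2$ in $\mathrm{VFS}$; and if $M_1\to M_2$ in $\mathrm{VFS}$ then $\Theta M_1\to\Theta M_2$ in $\mathrm{VES}$; (b) for all terms $M$ and values $V$ of $\mathrm{CES}$: $\Phi(\Upsilon M)=M$ and $\Phi(\Upsilon V)=V$; for all terms $M$ and values $V$ of $\mathrm{CNF}$: $\Upsilon(\Phi M)=M$ and $\Upsilon(\Phi V)=V$; if $M_1\to M_2$ in $\mathrm{CES}$ then $\Upsilon M_1\to\Upsilon M_2$ in $\mathrm{CNF}$; and if $M_1\to M_2$ in $\mathrm{CNF}$ then $\Phi M_1\to\Phi M_2$ in $\mathrm{CES}$.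
   Context: Terms are considered up to $\alpha$-conversion; $[V/x]$ is capture-avoiding substitution; $\to$ is one-step reduction (closure of the listed rules under all constructors). In all four calculi values are $V,W::=x\mid\lambda x.M$. $\mathrm{VES}$ (value-enclosed style): terms $M,N::=V\mid \mathsf{let}\,x:=V\,\mathsf{in}\,c_x$, where for a variable $x$ the class $c_x::= M\mid \mathsf{let}\,y:=xW\,\mathsf{in}\,N$ with $x\notin FV(W)\cup FV(N)$ ($\mathsf{let}\,x:=\dots\,\mathsf{in}\,B$ binds $x$ in $B$). An operation $\mathsf{LET}\,y:=M\,\mathsf{in}\,P$ (and $\mathsf{LET}\,y:=c_z\,\mathsf{in}\,P$, with $z\notin FV(P)$) is defined by: $\mathsf{LET}\,y:=V\,\mathsf{in}\,P=\mathsf{let}\,y:=V\,\mathsf{in}\,P$; $\mathsf{LET}\,y:=(\mathsf{let}\,z:=V\,\mathsf{in}\,c_z)\,\mathsf{in}\,P=\mathsf{let}\,z:=V\,\mathsf{in}\,\mathsf{LET}\,y:=c_z\,\mathsf{in}\,P$; $\mathsf{LET}\,y:=(\mathsf{let}\,x:=zW\,\mathsf{in}\,N)\,\mathsf{in}\,P=\mathsf{let}\,x:=zW\,\mathsf{in}\,\mathsf{LET}\,y:=N\,\mathsf{in}\,P$. Rules: $(B_v)$ $\mathsf{let}\,y:=\lambda x.M\,\mathsf{in}\,\mathsf{let}\,z:=yV\,\mathsf{in}\,P\to\mathsf{let}\,x:=V\,\mathsf{in}\,\mathsf{LET}\,z:=M\,\mathsf{in}\,P$; $(\mathit{let}_v)$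 $\mathsf{let}\,y:=V\,\mathsf{in}\,N\to[V/y]N$ ($N$ a term). $\mathrm{VFS}$: terms $M,N::=\uparrow V\mid \mathsf{C}_v(V,c)$; formal contexts $c::= x.M\mid (W,x.M)$ ($x$ bound in $M$). Auxiliary: $\mathsf{C}_v(\uparrow V:c')=\mathsf{C}_v(V,c')$, $\mathsf{C}_v(\mathsf{C}_v(V,c):c')=\mathsf{C}_v(V,(c:c'))$, $((x.M):c')=x.\mathsf{C}_v(M:c')$, $((W,x.M):c')=(W,x.\mathsf{C}_v(M:c'))$. Rules: $(B_v)$ $\mathsf{C}_v(\lambda x.M,(V,y.N))\to \mathsf{C}_v(V,x.\mathsf{C}_v(M:y.N))$; $(\sigma_v)$ $\mathsf{C}_v(V,y.N)\to [V/y]N$. $\mathrm{CES}$ (continuation-enclosing style): terms $M::=V\mid\mathsf{let}\,x:=VW\,\mathsf{in}\,M$. $\mathsf{LET}\,y:=V\,\mathsf{in}\,P=[V/y]P$; $\mathsf{LET}\,y:=(\mathsf{let}\,x:=VW\,\mathsf{in}\,M)\,\mathsf{in}\,P=\mathsf{let}\,x:=VW\,\mathsf{in}\,\mathsf{LET}\,y:=M\,\mathsf{in}\,P$. Rule: $(\beta_v)$ $\mathsf{let}\,y:=(\lambda x.M)V\,\mathsf{in}\,P\to\mathsf{LET}\,y:=[V/x]M\,\mathsf{in}\,P$. $\mathrm{CNF}$ (commutative normal forms of call-by-value generalized applications): terms $M::=V\mid V(W,x.M)$ ($x$ bound in $M$). Left substitution: $\langle V\backslash x\rangle P=[V/x]P$,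 $\langle V(W,y.N)\backslash x\rangle P=V(W,y.\langle N\backslash x\rangle P)$. Rule: $(\beta_v)$ $(\lambda y.M)(W,x.P)\to\langle [W/y]M\backslash x\rangle P$. Maps: $\Psi(V)=\uparrow\Psi_v(V)$; $\Psi(\mathsf{let}\,x:=V\,\mathsf{in}\,c_x)=\mathsf{C}_v(\Psi_v V,\Psi_x(c_x))$; $\Psi_v(x)=x$; $\Psi_v(\lambda x.M)=\lambda x.\Psi M$; $\Psi_x(M)=x.\Psi M$; $\Psi_x(\mathsf{let}\,y:=xW\,\mathsf{in}\,N)=(\Psi_v W,y.\Psi N)$. $\Theta(\uparrow V)=\Theta_v(V)$; $\Theta(\mathsf{C}_v(V,c))=\mathsf{let}\,x:=\Theta_v V\,\mathsf{in}\,\Theta_x(c)$ ($x$ fresh); $\Theta_v(x)=x$; $\Theta_v(\lambda x.M)=\lambda x.\Theta M$; $\Theta_x(y.M)=[x/y](\Theta M)$; $\Theta_x(W,y.N)=\mathsf{let}\,y:=x(\Theta_v W)\,\mathsf{in}\,\Theta N$. $\Upsilon(x)=x$, $\Upsilon(\lambda x.M)=\lambda x.\Upsilon M$, $\Upsilon(\mathsf{let}\,x:=VW\,\mathsf{in}\,M)=\Upsilon V(\Upsilon W,x.\Upsilon M)$; $\Phi(x)=x$, $\Phi(\lambda x.M)=\lambda x.\Phi M$, $\Phi(V(W,x.M))=\mathsf{let}\,x:=\Phi V\,\Phi W\,\mathsf{in}\,\Phi M$. *)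

theory Defs
  imports Main
begin

text \<open>All four calculi are represented with de Bruijn indices, which is the standard
  way of working with terms up to alpha-conversion: index 0 refers to the nearest
  enclosing binder.  lift k shifts free indices at least k by one; subst k U
  substitutes U for index k (capture-avoidingly) and decrements indices above k.\<close>

text \<open>ves_tm: M ::= V | let x := V in c_x.
  ves_ctx: the class c_x (relative to the scope outside the binder x):
   VC M      = M, with M in the scope of x (x may occur in M);
   VApp W N  = let y := x W in N, where x is the enclosing let-bound variable; since
               x is required not to occur in W nor N, W lives in the outer scope
               and N lives in the outer scope extended by y only.\<close>

datatype ves_tm = VVal ves_val | VLet ves_val ves_ctx
and ves_val = VVar nat | VLam ves_tm
and ves_ctx = VC ves_tm | VApp ves_val ves_tm

primrec ves_lift :: "nat \<Rightarrow> ves_tm \<Rightarrow> ves_tm"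
and ves_lift_v :: "nat \<Rightarrow> ves_val \<Rightarrow> ves_val"
and ves_lift_c :: "nat \<Rightarrow> ves_ctx \<Rightarrow> ves_ctx" where
  "ves_lift k (VVal V) = VVal (ves_lift_v k V)"
| "ves_lift k (VLet V c) = VLet (ves_lift_v k V) (ves_lift_c k c)"
| "ves_lift_v k (VVar i) = VVar (if i < k then i else Suc i)"
| "ves_lift_v k (VLam M) = VLam (ves_lift (Suc k) M)"
| "ves_lift_c k (VC M) = VC (ves_lift (Suc k) M)"
| "ves_lift_c k (VApp W N) = VApp (ves_lift_v k W) (ves_lift (Suc k) N)"

primrec ves_subst :: "nat \<Rightarrow> ves_val \<Rightarrow> ves_tm \<Rightarrow> ves_tm"
and ves_subst_v :: "nat \<Rightarrow> ves_val \<Rightarrow> ves_val \<Rightarrow> ves_val"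
and ves_subst_c :: "nat \<Rightarrow> ves_val \<Rightarrow> ves_ctx \<Rightarrow> ves_ctx" where
  "ves_subst k U (VVal V) = VVal (ves_subst_v k U V)"
| "ves_subst k U (VLet V c) = VLet (ves_subst_v k U V) (ves_subst_c k U c)"
| "ves_subst_v k U (VVar i) = (if i < k then VVar i else if i = k then U else VVar (i - 1))"
| "ves_subst_v k U (VLam M) = VLam (ves_subst (Suc k) (ves_lift_v 0 U) M)"
| "ves_subst_c k U (VC M) = VC (ves_subst (Suc k) (ves_lift_v 0 U) M)"
| "ves_subst_c k U (VApp W N) = VApp (ves_subst_v k U W) (ves_subst (Suc k) (ves_lift_v 0 U) N)"

text \<open>ves_LET M P = LET y := M in P (P under the binder y);
  ves_LETc c P = LET y := c_z in P, where c is a c_z and P (under binder y) does not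
  contain z, so P lives in the scope outside z.\<close>

primrec ves_LET :: "ves_tm \<Rightarrow> ves_tm \<Rightarrow> ves_tm"
and ves_LETc :: "ves_ctx \<Rightarrow> ves_tm \<Rightarrow> ves_ctx" where
  "ves_LET (VVal V) P = VLet V (VC P)"
| "ves_LET (VLet V c) P = VLet V (ves_LETc c P)"
| "ves_LETc (VC M) P = VC (ves_LET M (ves_lift 1 P))"
| "ves_LETc (VApp W N) P = VApp W (ves_LET N (ves_lift 1 P))"

inductive ves_step :: "ves_tm \<Rightarrow> ves_tm \<Rightarrow> bool"
and ves_step_v :: "ves_val \<Rightarrow> ves_val \<Rightarrow> bool"
and ves_step_c :: "ves_ctx \<Rightarrow> ves_ctx \<Rightarrow> bool" where
  ves_Bv: "ves_step (VLet (VLam M) (VApp V P)) (VLet V (VC (ves_LET M (ves_lift 1 P))))"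
| ves_letv: "ves_step (VLet V (VC N)) (ves_subst 0 V N)"
| ves_cVal: "ves_step_v V V' \<Longrightarrow> ves_step (VVal V) (VVal V')"
| ves_cLet1: "ves_step_v V V' \<Longrightarrow> ves_step (VLet V c) (VLet V' c)"
| ves_cLet2: "ves_step_c c c' \<Longrightarrow> ves_step (VLet V c) (VLet V c')"
| ves_cLam: "ves_step M M' \<Longrightarrow> ves_step_v (VLam M) (VLam M')"
| ves_cC: "ves_step M M' \<Longrightarrow> ves_step_c (VC M) (VC M')"
| ves_cApp1: "ves_step_v W W' \<Longrightarrow> ves_step_c (VApp W N) (VApp W' N)"
| ves_cApp2: "ves_step N N' \<Longrightarrow> ves_step_c (VApp W N) (VApp W N')"

text \<open>vfs_tm: M ::= up V | C_v(V,c); vfs_ctx: c ::= x.M (FAbs M) | (W, x.M) (FPair W M).\<close>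

datatype vfs_tm = Up vfs_val | Cv vfs_val vfs_ctx
and vfs_val = FVar nat | FLam vfs_tm
and vfs_ctx = FAbs vfs_tm | FPair vfs_val vfs_tm

primrec vfs_lift :: "nat \<Rightarrow> vfs_tm \<Rightarrow> vfs_tm"
and vfs_lift_v :: "nat \<Rightarrow> vfs_val \<Rightarrow> vfs_val"
and vfs_lift_c :: "nat \<Rightarrow> vfs_ctx \<Rightarrow> vfs_ctx" where
  "vfs_lift k (Up V) = Up (vfs_lift_v k V)"
| "vfs_lift k (Cv V c) = Cv (vfs_lift_v k V) (vfs_lift_c k c)"
| "vfs_lift_v k (FVar i) = FVar (if i < k then i else Suc i)"
| "vfs_lift_v k (FLam M) = FLam (vfs_lift (Suc k) M)"
| "vfs_lift_c k (FAbs M) = FAbs (vfs_lift (Suc k) M)"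
| "vfs_lift_c k (FPair W M) = FPair (vfs_lift_v k W) (vfs_lift (Suc k) M)"

primrec vfs_subst :: "nat \<Rightarrow> vfs_val \<Rightarrow> vfs_tm \<Rightarrow> vfs_tm"
and vfs_subst_v :: "nat \<Rightarrow> vfs_val \<Rightarrow> vfs_val \<Rightarrow> vfs_val"
and vfs_subst_c :: "nat \<Rightarrow> vfs_val \<Rightarrow> vfs_ctx \<Rightarrow> vfs_ctx" where
  "vfs_subst k U (Up V) = Up (vfs_subst_v k U V)"
| "vfs_subst k U (Cv V c) = Cv (vfs_subst_v k U V) (vfs_subst_c k U c)"
| "vfs_subst_v k U (FVar i) = (if i < k then FVar i else if i = k then U else FVar (i - 1))"
| "vfs_subst_v k U (FLam M) = FLam (vfs_subst (Suc k) (vfs_lift_v 0 U) M)"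
| "vfs_subst_c k U (FAbs M) = FAbs (vfs_subst (Suc k) (vfs_lift_v 0 U) M)"
| "vfs_subst_c k U (FPair W M) = FPair (vfs_subst_v k U W) (vfs_subst (Suc k) (vfs_lift_v 0 U) M)"

text \<open>vfs_app M c' = (M : c') and vfs_cat c c' = (c : c').\<close>

primrec vfs_app :: "vfs_tm \<Rightarrow> vfs_ctx \<Rightarrow> vfs_tm"
and vfs_cat :: "vfs_ctx \<Rightarrow> vfs_ctx \<Rightarrow> vfs_ctx" where
  "vfs_app (Up V) c' = Cv V c'"
| "vfs_app (Cv V c) c' = Cv V (vfs_cat c c')"
| "vfs_cat (FAbs M) c' = FAbs (vfs_app M (vfs_lift_c 0 c'))"
| "vfs_cat (FPair W M) c' = FPair W (vfs_app M (vfs_lift_c 0 c'))"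

inductive vfs_step :: "vfs_tm \<Rightarrow> vfs_tm \<Rightarrow> bool"
and vfs_step_v :: "vfs_val \<Rightarrow> vfs_val \<Rightarrow> bool"
and vfs_step_c :: "vfs_ctx \<Rightarrow> vfs_ctx \<Rightarrow> bool" where
  vfs_Bv: "vfs_step (Cv (FLam M) (FPair V N)) (Cv V (FAbs (vfs_app M (vfs_lift_c 0 (FAbs N)))))"
| vfs_sigmav: "vfs_step (Cv V (FAbs N)) (vfs_subst 0 V N)"
| vfs_cUp: "vfs_step_v V V' \<Longrightarrow> vfs_step (Up V) (Up V')"
| vfs_cCv1: "vfs_step_v V V' \<Longrightarrow> vfs_step (Cv V c) (Cv V' c)"
| vfs_cCv2: "vfs_step_c c c' \<Longrightarrow> vfs_step (Cv V c) (Cv V c')"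
| vfs_cLam: "vfs_step M M' \<Longrightarrow> vfs_step_v (FLam M) (FLam M')"
| vfs_cAbs: "vfs_step M M' \<Longrightarrow> vfs_step_c (FAbs M) (FAbs M')"
| vfs_cPair1: "vfs_step_v W W' \<Longrightarrow> vfs_step_c (FPair W M) (FPair W' M)"
| vfs_cPair2: "vfs_step M M' \<Longrightarrow> vfs_step_c (FPair W M) (FPair W M')"

text \<open>ces_tm: M ::= V | let x := V W in M (CLet V W M, M under binder x).\<close>

datatype ces_tm = CVal ces_val | CLet ces_val ces_val ces_tm
and ces_val = CVar nat | CLam ces_tm

primrec ces_lift :: "nat \<Rightarrow> ces_tm \<Rightarrow> ces_tm"
and ces_lift_v :: "nat \<Rightarrow> ces_val \<Rightarrow> ces_val" where
  "ces_lift k (CVal V) = CVal (ces_lift_v k V)"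
| "ces_lift k (CLet V W M) = CLet (ces_lift_v k V) (ces_lift_v k W) (ces_lift (Suc k) M)"
| "ces_lift_v k (CVar i) = CVar (if i < k then i else Suc i)"
| "ces_lift_v k (CLam M) = CLam (ces_lift (Suc k) M)"

primrec ces_subst :: "nat \<Rightarrow> ces_val \<Rightarrow> ces_tm \<Rightarrow> ces_tm"
and ces_subst_v :: "nat \<Rightarrow> ces_val \<Rightarrow> ces_val \<Rightarrow> ces_val" where
  "ces_subst k U (CVal V) = CVal (ces_subst_v k U V)"
| "ces_subst k U (CLet V W M) =
     CLet (ces_subst_v k U V) (ces_subst_v k U W) (ces_subst (Suc k) (ces_lift_v 0 U) M)"
| "ces_subst_v k U (CVar i) = (if i < k then CVar i else if i = k then U else CVar (i - 1))"
| "ces_subst_v k U (CLam M) = CLam (ces_subst (Suc k) (ces_lift_v 0 U) M)"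

text \<open>ces_LET M P = LET y := M in P (P under the binder y).\<close>

primrec ces_LET :: "ces_tm \<Rightarrow> ces_tm \<Rightarrow> ces_tm" where
  "ces_LET (CVal V) P = ces_subst 0 V P"
| "ces_LET (CLet V W M) P = CLet V W (ces_LET M (ces_lift 1 P))"

inductive ces_step :: "ces_tm \<Rightarrow> ces_tm \<Rightarrow> bool"
and ces_step_v :: "ces_val \<Rightarrow> ces_val \<Rightarrow> bool" where
  ces_betav: "ces_step (CLet (CLam M) V P) (ces_LET (ces_subst 0 V M) P)"
| ces_cVal: "ces_step_v V V' \<Longrightarrow> ces_step (CVal V) (CVal V')"
| ces_cLet1: "ces_step_v V V' \<Longrightarrow> ces_step (CLet V W M) (CLet V' W M)"
| ces_cLet2: "ces_step_v W W' \<Longrightarrow> ces_step (CLet V W M) (CLet V W' M)"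
| ces_cLet3: "ces_step M M' \<Longrightarrow> ces_step (CLet V W M) (CLet V W M')"
| ces_cLam: "ces_step M M' \<Longrightarrow> ces_step_v (CLam M) (CLam M')"

text \<open>cnf_tm: M ::= V | V(W, x.M) (NApp V W M, M under binder x).\<close>

datatype cnf_tm = NVal cnf_val | NApp cnf_val cnf_val cnf_tm
and cnf_val = NVar nat | NLam cnf_tm

primrec cnf_lift :: "nat \<Rightarrow> cnf_tm \<Rightarrow> cnf_tm"
and cnf_lift_v :: "nat \<Rightarrow> cnf_val \<Rightarrow> cnf_val" where
  "cnf_lift k (NVal V) = NVal (cnf_lift_v k V)"
| "cnf_lift k (NApp V W M) = NApp (cnf_lift_v k V) (cnf_lift_v k W) (cnf_lift (Suc k) M)"
| "cnf_lift_v k (NVar i) = NVar (if i < k then i else Suc i)"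
| "cnf_lift_v k (NLam M) = NLam (cnf_lift (Suc k) M)"

primrec cnf_subst :: "nat \<Rightarrow> cnf_val \<Rightarrow> cnf_tm \<Rightarrow> cnf_tm"
and cnf_subst_v :: "nat \<Rightarrow> cnf_val \<Rightarrow> cnf_val \<Rightarrow> cnf_val" where
  "cnf_subst k U (NVal V) = NVal (cnf_subst_v k U V)"
| "cnf_subst k U (NApp V W M) =
     NApp (cnf_subst_v k U V) (cnf_subst_v k U W) (cnf_subst (Suc k) (cnf_lift_v 0 U) M)"
| "cnf_subst_v k U (NVar i) = (if i < k then NVar i else if i = k then U else NVar (i - 1))"
| "cnf_subst_v k U (NLam M) = NLam (cnf_subst (Suc k) (cnf_lift_v 0 U) M)"

text \<open>cnf_lsubst M P = left substitution of M for x in P (P under binder x).\<close>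

primrec cnf_lsubst :: "cnf_tm \<Rightarrow> cnf_tm \<Rightarrow> cnf_tm" where
  "cnf_lsubst (NVal V) P = cnf_subst 0 V P"
| "cnf_lsubst (NApp V W N) P = NApp V W (cnf_lsubst N (cnf_lift 1 P))"

inductive cnf_step :: "cnf_tm \<Rightarrow> cnf_tm \<Rightarrow> bool"
and cnf_step_v :: "cnf_val \<Rightarrow> cnf_val \<Rightarrow> bool" where
  cnf_betav: "cnf_step (NApp (NLam M) W P) (cnf_lsubst (cnf_subst 0 W M) P)"
| cnf_cVal: "cnf_step_v V V' \<Longrightarrow> cnf_step (NVal V) (NVal V')"
| cnf_cApp1: "cnf_step_v V V' \<Longrightarrow> cnf_step (NApp V W M) (NApp V' W M)"
| cnf_cApp2: "cnf_step_v W W' \<Longrightarrow> cnf_step (NApp V W M) (NApp V W' M)"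
| cnf_cApp3: "cnf_step M M' \<Longrightarrow> cnf_step (NApp V W M) (NApp V W M')"
| cnf_cLam: "cnf_step M M' \<Longrightarrow> cnf_step_v (NLam M) (NLam M')"

primrec Psi :: "ves_tm \<Rightarrow> vfs_tm"
and Psi_v :: "ves_val \<Rightarrow> vfs_val"
and Psi_x :: "ves_ctx \<Rightarrow> vfs_ctx" where
  "Psi (VVal V) = Up (Psi_v V)"
| "Psi (VLet V c) = Cv (Psi_v V) (Psi_x c)"
| "Psi_v (VVar i) = FVar i"
| "Psi_v (VLam M) = FLam (Psi M)"
| "Psi_x (VC M) = FAbs (Psi M)"
| "Psi_x (VApp W N) = FPair (Psi_v W) (Psi N)"

primrec Theta :: "vfs_tm \<Rightarrow> ves_tm"
and Theta_v :: "vfs_val \<Rightarrow> ves_val"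
and Theta_x :: "vfs_ctx \<Rightarrow> ves_ctx" where
  "Theta (Up V) = VVal (Theta_v V)"
| "Theta (Cv V c) = VLet (Theta_v V) (Theta_x c)"
| "Theta_v (FVar i) = VVar i"
| "Theta_v (FLam M) = VLam (Theta M)"
| "Theta_x (FAbs M) = VC (Theta M)"
| "Theta_x (FPair W N) = VApp (Theta_v W) (Theta N)"

primrec Upsilon :: "ces_tm \<Rightarrow> cnf_tm"
and Upsilon_v :: "ces_val \<Rightarrow> cnf_val" where
  "Upsilon (CVal V) = NVal (Upsilon_v V)"
| "Upsilon (CLet V W M) = NApp (Upsilon_v V) (Upsilon_v W) (Upsilon M)"
| "Upsilon_v (CVar i) = NVar i"
| "Upsilon_v (CLam M) = NLam (Upsilon M)"

primrec Phi :: "cnf_tm \<Rightarrow> ces_tm"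
and Phi_v :: "cnf_val \<Rightarrow> ces_val" where
  "Phi (NVal V) = CVal (Phi_v V)"
| "Phi (NApp V W M) = CLet (Phi_v V) (Phi_v W) (Phi M)"
| "Phi_v (NVar i) = CVar i"
| "Phi_v (NLam M) = CLam (Phi M)"

end

theory Submission
  imports Defs
begin

text \<open>All four translations are homomorphic on the syntax, so they are mutually inverse
  and commute with lifting and substitution.  The only rules that are not translated
  verbatim are the beta rules, whose contracta use the auxiliary operations; these are
  matched by the translations: the VES operation LET y := M in P corresponds to the
  concatenation (M : y.P) of VFS, and the CES operation LET to left substitution in CNF.
  Hence every redex is sent to a redex whose contractum is the image of the original
  contractum, and the congruence rules correspond one to one.\<close>

lemma Theta_Psi [simp]:
  "Theta (Psi M) = M" "Theta_v (Psi_v V) = V" "Theta_x (Psi_x c) = c"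
  by (induct M and V and c) auto

lemma Psi_Theta [simp]:
  "Psi (Theta M) = M" "Psi_v (Theta_v V) = V" "Psi_x (Theta_x c) = c"
  by (induct M and V and c) auto

lemma Phi_Upsilon [simp]: "Phi (Upsilon M) = M" "Phi_v (Upsilon_v V) = V"
  by (induct M and V) auto

lemma Upsilon_Phi [simp]: "Upsilon (Phi M) = M" "Upsilon_v (Phi_v V) = V"
  by (induct M and V) auto

lemma Psi_lift:
  "Psi (ves_lift k M) = vfs_lift k (Psi M)"
  "Psi_v (ves_lift_v k V) = vfs_lift_v k (Psi_v V)"
  "Psi_x (ves_lift_c k c) = vfs_lift_c k (Psi_x c)"
  by (induct M and V and c arbitrary: k and k and k) auto

lemma Psi_subst:
  "Psi (ves_subst k U M) = vfs_subst k (Psi_v U) (Psi M)"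
  "Psi_v (ves_subst_v k U V) = vfs_subst_v k (Psi_v U) (Psi_v V)"
  "Psi_x (ves_subst_c k U c) = vfs_subst_c k (Psi_v U) (Psi_x c)"
  by (induct M and V and c arbitrary: k U and k U and k U) (auto simp: Psi_lift)

lemma Psi_ves_LET:
  "Psi (ves_LET M P) = vfs_app (Psi M) (FAbs (Psi P))"
  "Psi_x (ves_LETc c P) = vfs_cat (Psi_x c) (FAbs (Psi P))"
  by (induct M and c arbitrary: P and P) (auto simp: Psi_lift)

lemma Theta_lift:
  "Theta (vfs_lift k M) = ves_lift k (Theta M)"
  "Theta_v (vfs_lift_v k V) = ves_lift_v k (Theta_v V)"
  "Theta_x (vfs_lift_c k c) = ves_lift_c k (Theta_x c)"
  by (induct M and V and c arbitrary: k and k and k) auto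

lemma Theta_subst:
  "Theta (vfs_subst k U M) = ves_subst k (Theta_v U) (Theta M)"
  "Theta_v (vfs_subst_v k U V) = ves_subst_v k (Theta_v U) (Theta_v V)"
  "Theta_x (vfs_subst_c k U c) = ves_subst_c k (Theta_v U) (Theta_x c)"
  by (induct M and V and c arbitrary: k U and k U and k U) (auto simp: Theta_lift)

lemma Theta_vfs_app:
  "Theta (vfs_app M (FAbs P)) = ves_LET (Theta M) (Theta P)"
  "Theta_x (vfs_cat c (FAbs P)) = ves_LETc (Theta_x c) (Theta P)"
  by (induct M and c arbitrary: P and P) (auto simp: Theta_lift)

lemma Psi_preserves_step:
  "ves_step M N \<Longrightarrow> vfs_step (Psi M) (Psi N)"
  "ves_step_v V W \<Longrightarrow> vfs_step_v (Psi_v V) (Psi_v W)"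
  "ves_step_c c d \<Longrightarrow> vfs_step_c (Psi_x c) (Psi_x d)"
proof (induct rule: ves_step_ves_step_v_ves_step_c.inducts)
  case (ves_Bv M V P)
  have "Psi (VLet V (VC (ves_LET M (ves_lift 1 P))))
      = Cv (Psi_v V) (FAbs (vfs_app (Psi M) (vfs_lift_c 0 (FAbs (Psi P)))))"
    by (simp add: Psi_ves_LET Psi_lift)
  then show ?case
    using vfs_Bv[of "Psi M" "Psi_v V" "Psi P"] by simp
next
  case (ves_letv V N)
  show ?case
    by (simp add: Psi_subst vfs_sigmav)
qed (auto intro: vfs_step_vfs_step_v_vfs_step_c.intros)

lemma Theta_preserves_step:
  "vfs_step M N \<Longrightarrow> ves_step (Theta M) (Theta N)"
  "vfs_step_v V W \<Longrightarrow> ves_step_v (Theta_v V) (Theta_v W)"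
  "vfs_step_c c d \<Longrightarrow> ves_step_c (Theta_x c) (Theta_x d)"
proof (induct rule: vfs_step_vfs_step_v_vfs_step_c.inducts)
  case (vfs_Bv M V N)
  have "Theta (Cv V (FAbs (vfs_app M (vfs_lift_c 0 (FAbs N)))))
      = VLet (Theta_v V) (VC (ves_LET (Theta M) (ves_lift 1 (Theta N))))"
    by (simp add: Theta_vfs_app Theta_lift)
  then show ?case
    using ves_Bv[of "Theta M" "Theta_v V" "Theta N"] by simp
next
  case (vfs_sigmav V N)
  show ?case
    by (simp add: Theta_subst ves_letv)
qed (auto intro: ves_step_ves_step_v_ves_step_c.intros)

lemma Upsilon_lift:
  "Upsilon (ces_lift k M) = cnf_lift k (Upsilon M)"
  "Upsilon_v (ces_lift_v k V) = cnf_lift_v k (Upsilon_v V)"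
  by (induct M and V arbitrary: k and k) auto

lemma Upsilon_subst:
  "Upsilon (ces_subst k U M) = cnf_subst k (Upsilon_v U) (Upsilon M)"
  "Upsilon_v (ces_subst_v k U V) = cnf_subst_v k (Upsilon_v U) (Upsilon_v V)"
  by (induct M and V arbitrary: k U and k U) (auto simp: Upsilon_lift)

lemma Upsilon_ces_LET: "Upsilon (ces_LET M P) = cnf_lsubst (Upsilon M) (Upsilon P)"
  by (induct M arbitrary: P) (auto simp: Upsilon_lift Upsilon_subst)

lemma Phi_lift:
  "Phi (cnf_lift k M) = ces_lift k (Phi M)"
  "Phi_v (cnf_lift_v k V) = ces_lift_v k (Phi_v V)"
  by (induct M and V arbitrary: k and k) auto

lemma Phi_subst:
  "Phi (cnf_subst k U M) = ces_subst k (Phi_v U) (Phi M)"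
  "Phi_v (cnf_subst_v k U V) = ces_subst_v k (Phi_v U) (Phi_v V)"
  by (induct M and V arbitrary: k U and k U) (auto simp: Phi_lift)

lemma Phi_cnf_lsubst: "Phi (cnf_lsubst M P) = ces_LET (Phi M) (Phi P)"
  by (induct M arbitrary: P) (auto simp: Phi_lift Phi_subst)

lemma Upsilon_preserves_step:
  "ces_step M N \<Longrightarrow> cnf_step (Upsilon M) (Upsilon N)"
  "ces_step_v V W \<Longrightarrow> cnf_step_v (Upsilon_v V) (Upsilon_v W)"
proof (induct rule: ces_step_ces_step_v.inducts)
  case (ces_betav M V P)
  have "Upsilon (ces_LET (ces_subst 0 V M) P)
      = cnf_lsubst (cnf_subst 0 (Upsilon_v V) (Upsilon M)) (Upsilon P)"
    by (simp add: Upsilon_ces_LET Upsilon_subst)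
  then show ?case
    by (simp add: cnf_betav)
qed (auto intro: cnf_step_cnf_step_v.intros)

lemma Phi_preserves_step:
  "cnf_step M N \<Longrightarrow> ces_step (Phi M) (Phi N)"
  "cnf_step_v V W \<Longrightarrow> ces_step_v (Phi_v V) (Phi_v W)"
proof (induct rule: cnf_step_cnf_step_v.inducts)
  case (cnf_betav M W P)
  have "Phi (cnf_lsubst (cnf_subst 0 W M) P) = ces_LET (ces_subst 0 (Phi_v W) (Phi M)) (Phi P)"
    by (simp add: Phi_cnf_lsubst Phi_subst)
  then show ?case
    by (simp add: ces_betav)
qed (auto intro: ces_step_ces_step_v.intros)

theorem theorem4:
  shows "((\<forall>M. Theta (Psi M) = M) \<and> (\<forall>V. Theta_v (Psi_v V) = V) \<and> (\<forall>c. Theta_x (Psi_x c) = c)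
        \<and> (\<forall>M. Psi (Theta M) = M) \<and> (\<forall>V. Psi_v (Theta_v V) = V) \<and> (\<forall>c. Psi_x (Theta_x c) = c)
        \<and> (\<forall>M1 M2. ves_step M1 M2 \<longrightarrow> vfs_step (Psi M1) (Psi M2))
        \<and> (\<forall>M1 M2. vfs_step M1 M2 \<longrightarrow> ves_step (Theta M1) (Theta M2)))
     \<and> ((\<forall>M. Phi (Upsilon M) = M) \<and> (\<forall>V. Phi_v (Upsilon_v V) = V)
        \<and> (\<forall>M. Upsilon (Phi M) = M) \<and> (\<forall>V. Upsilon_v (Phi_v V) = V)
        \<and> (\<forall>M1 M2. ces_step M1 M2 \<longrightarrow> cnf_step (Upsilon M1) (Upsilon M2))
        \<and> (\<forall>M1 M2. cnf_step M1 M2 \<longrightarrow> ces_step (Phi M1) (Phi M2)))"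
  by (simp add: Psi_preserves_step Theta_preserves_step
      Upsilon_preserves_step Phi_preserves_step)

end
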